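(* Let $X,Y,Z$ be random variables on finite alphabets $\mathcal{X},\mathcal{Y},\mathcal{Z}$. For each $y\in\mathcal{Y}$ with $\Pr(Y=y)>0$, let $(A_y,B_y,C_y)$ be the random triple on $\mathcal{X}\times\mathcal{Y}\times\mathcal{Z}$ with $$\Pr(A_y=x,B_y=y',C_y=z)=\begin{cases}0 & \text{if } \Pr(Z=z)=0,\\ \dfrac{\Pr(X=x,Y=y',Z=z)\,\Pr(Z=z\mid Y=y)}{\Pr(Z=z)} & \text{otherwise.}\end{cases}$$ Then $\sum_{y:\Pr(Y=y)>0}\Pr(Y=y)\,H(A_y)\le H(X)$.
   Context: $H$ denotes Shannon entropy. *)

theory Defs
  imports "HOL-Probability.Probability"
begin

definition shannon_entropy :: "('a::finite \<Rightarrow> real) \<Rightarrow> real" where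
  "shannon_entropy p = - (\<Sum>x\<in>UNIV. if p x = 0 then 0 else p x * log 2 (p x))"

definition probX :: "('x \<times> 'y \<times> 'z) pmf \<Rightarrow> 'x \<Rightarrow> real" where
  "probX P x = pmf (map_pmf (\<lambda>(x,y,z). x) P) x"
definition probY :: "('x \<times> 'y \<times> 'z) pmf \<Rightarrow> 'y \<Rightarrow> real" where
  "probY P y = pmf (map_pmf (\<lambda>(x,y,z). y) P) y"
definition probZ :: "('x \<times> 'y \<times> 'z) pmf \<Rightarrow> 'z \<Rightarrow> real" where
  "probZ P z = pmf (map_pmf (\<lambda>(x,y,z). z) P) z"
definition probYZ :: "('x \<times> 'y \<times> 'z) pmf \<Rightarrow> 'y \<Rightarrow> 'z \<Rightarrow> real" where
  "probYZ P y z = pmf (map_pmf (\<lambda>(x,y,z). (y,z)) P) (y,z)"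

definition condZY :: "('x \<times> 'y \<times> 'z) pmf \<Rightarrow> 'z \<Rightarrow> 'y \<Rightarrow> real" where
  "condZY P z y = probYZ P y z / probY P y"

definition tripleABC :: "('x \<times> 'y \<times> 'z) pmf \<Rightarrow> 'y \<Rightarrow> 'x \<Rightarrow> 'y \<Rightarrow> 'z \<Rightarrow> real" where
  "tripleABC P y x y' z =
     (if probZ P z = 0 then 0 else pmf P (x, y', z) * condZY P z y / probZ P z)"

definition lawA :: "('x \<times> 'y::finite \<times> 'z::finite) pmf \<Rightarrow> 'y \<Rightarrow> 'x \<Rightarrow> real" where
  "lawA P y x = (\<Sum>y'\<in>UNIV. \<Sum>z\<in>UNIV. tripleABC P y x y' z)"

end

theory Submission
  imports Defs
begin

text \<open>Summing \<open>Pr(Y = y) Pr(A\<^sub>y = x)\<close> over \<open>y\<close> turns \<open>Pr(Y = y) Pr(Z = z | Y = y)\<close> into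
  \<open>Pr(Y = y, Z = z)\<close>, whose sum over \<open>y\<close> cancels the denominator \<open>Pr(Z = z)\<close>. Hence the law of
  \<open>X\<close> is the mixture of the laws of the \<open>A\<^sub>y\<close> with weights \<open>Pr(Y = y)\<close>, and the inequality is
  the concavity of entropy, i.e. Jensen's inequality for \<open>t log t\<close>, which follows from the
  supporting lines of this convex function.\<close>

definition xlog2x :: "real \<Rightarrow> real" where
  "xlog2x t = (if t = 0 then 0 else t * log 2 t)"

lemma shannon_entropy_xlog2x: "shannon_entropy p = - (\<Sum>x\<in>UNIV. xlog2x (p x))"
  unfolding shannon_entropy_def xlog2x_def by simp

lemma xlog2x_supporting_line:
  assumes "a \<ge> 0" and m: "m > 0"
  shows "xlog2x m + (a - m) * (log 2 m + 1 / ln 2) \<le> xlog2x a"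
proof (cases "a = 0")
  case True
  then show ?thesis using m by (simp add: xlog2x_def algebra_simps)
next
  case False
  with \<open>a \<ge> 0\<close> have a: "a > 0" by simp
  have "a * ln (m / a) \<le> a * (m / a - 1)"
    using a m by (intro mult_left_mono ln_le_minus_one) auto
  then have "a * (ln m - ln a) \<le> m - a"
    using a m by (simp add: ln_div algebra_simps)
  then have "0 \<le> (a * ln a - a * ln m - (a - m)) / ln 2"
    by (simp add: algebra_simps)
  also have "\<dots> = xlog2x a - (xlog2x m + (a - m) * (log 2 m + 1 / ln 2))"
    using a m by (simp add: xlog2x_def log_def field_simps)
  finally show ?thesis by simp
qed

lemma xlog2x_jensen:
  assumes "finite I" and w: "\<And>i. i \<in> I \<Longrightarrow> w i \<ge> 0" and "(\<Sum>i\<in>I. w i) = 1"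
    and a: "\<And>i. i \<in> I \<Longrightarrow> a i \<ge> 0"
  shows "xlog2x (\<Sum>i\<in>I. w i * a i) \<le> (\<Sum>i\<in>I. w i * xlog2x (a i))"
proof -
  define m where "m = (\<Sum>i\<in>I. w i * a i)"
  have "m \<ge> 0" unfolding m_def using w a by (intro sum_nonneg) auto
  show ?thesis
  proof (cases "m = 0")
    case True
    then have "\<forall>i\<in>I. w i * a i = 0"
      using \<open>finite I\<close> w a unfolding m_def by (subst sum_nonneg_eq_0_iff[symmetric]) auto
    then have "(\<Sum>i\<in>I. w i * xlog2x (a i)) = 0" by (intro sum.neutral) (auto simp: xlog2x_def)
    then show ?thesis using True by (simp add: m_def[symmetric] xlog2x_def)
  next
    case False
    with \<open>m \<ge> 0\<close> have "m > 0" by simp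
    define c where "c = log 2 m + 1 / ln 2"
    have "(\<Sum>i\<in>I. w i * xlog2x (a i)) \<ge> (\<Sum>i\<in>I. w i * (xlog2x m + (a i - m) * c))"
      using xlog2x_supporting_line[OF _ \<open>m > 0\<close>] w a unfolding c_def
      by (intro sum_mono mult_left_mono) auto
    also have "(\<Sum>i\<in>I. w i * (xlog2x m + (a i - m) * c)) =
        xlog2x m * (\<Sum>i\<in>I. w i) + c * (\<Sum>i\<in>I. w i * a i) - c * m * (\<Sum>i\<in>I. w i)"
      by (simp add: algebra_simps sum.distrib sum_subtractf sum_distrib_left)
    also have "\<dots> = xlog2x m"
      using \<open>(\<Sum>i\<in>I. w i) = 1\<close> by (simp add: m_def)
    finally show ?thesis by (simp add: m_def)
  qed
qed

lemma shannon_entropy_concave: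
  fixes p :: "'i \<Rightarrow> 'a::finite \<Rightarrow> real"
  assumes "finite I" and "\<And>i. i \<in> I \<Longrightarrow> w i \<ge> 0" and "(\<Sum>i\<in>I. w i) = 1"
    and "\<And>i x. i \<in> I \<Longrightarrow> p i x \<ge> 0"
  shows "(\<Sum>i\<in>I. w i * shannon_entropy (p i)) \<le> shannon_entropy (\<lambda>x. \<Sum>i\<in>I. w i * p i x)"
proof -
  have "(\<Sum>x\<in>UNIV. xlog2x (\<Sum>i\<in>I. w i * p i x)) \<le> (\<Sum>x\<in>UNIV. \<Sum>i\<in>I. w i * xlog2x (p i x))"
    using assms by (intro sum_mono xlog2x_jensen) auto
  also have "\<dots> = (\<Sum>i\<in>I. w i * (\<Sum>x\<in>UNIV. xlog2x (p i x)))"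
    by (simp add: sum_distrib_left) (rule sum.swap)
  finally show ?thesis by (simp add: shannon_entropy_xlog2x sum_negf)
qed

lemma pmf_map_pmf_finite:
  fixes P :: "'a::finite pmf"
  shows "pmf (map_pmf f P) v = (\<Sum>u\<in>UNIV. if f u = v then pmf P u else 0)"
  by (simp add: pmf_map measure_measure_pmf_finite sum.If_cases vimage_def)

lemma sum_UNIV_triple:
  fixes g :: "'x::finite \<times> 'y::finite \<times> 'z::finite \<Rightarrow> 'a::comm_monoid_add"
  shows "(\<Sum>u\<in>UNIV. g u) = (\<Sum>x\<in>UNIV. \<Sum>y\<in>UNIV. \<Sum>z\<in>UNIV. g (x, y, z))"
  by (simp add: UNIV_Times_UNIV[symmetric] sum.cartesian_product del: UNIV_Times_UNIV)

context
  fixes P :: "('x::finite \<times> 'y::finite \<times> 'z::finite) pmf"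
begin

lemma probX_eq_sum: "probX P x = (\<Sum>y\<in>UNIV. \<Sum>z\<in>UNIV. pmf P (x, y, z))"
  unfolding probX_def pmf_map_pmf_finite sum_UNIV_triple by (simp add: if_distrib sum.If_cases)

lemma probY_eq_sum: "probY P y = (\<Sum>x\<in>UNIV. \<Sum>z\<in>UNIV. pmf P (x, y, z))"
  unfolding probY_def pmf_map_pmf_finite sum_UNIV_triple by (simp add: if_distrib sum.If_cases)

lemma probZ_eq_sum: "probZ P z = (\<Sum>x\<in>UNIV. \<Sum>y\<in>UNIV. pmf P (x, y, z))"
  unfolding probZ_def pmf_map_pmf_finite sum_UNIV_triple by (simp add: if_distrib sum.If_cases)

lemma probYZ_eq_sum: "probYZ P y z = (\<Sum>x\<in>UNIV. pmf P (x, y, z))"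
  unfolding probYZ_def pmf_map_pmf_finite sum_UNIV_triple
  by (simp add: conj_commute[of "_ = y"] flip: if_if_eq_conj)

lemma sum_probY: "(\<Sum>y\<in>UNIV. probY P y) = 1"
  unfolding probY_def by (rule sum_pmf_eq_1) auto

lemma sum_probYZ: "(\<Sum>y\<in>UNIV. probYZ P y z) = probZ P z"
  unfolding probYZ_eq_sum probZ_eq_sum by (rule sum.swap)

lemma probYZ_le_probY: "probYZ P y z \<le> probY P y"
  unfolding probYZ_eq_sum probY_eq_sum
  by (subst sum.swap) (intro sum_mono member_le_sum, auto intro: sum_nonneg)

lemma probY_mult_condZY: "probY P y * condZY P z y = probYZ P y z"
proof (cases "probY P y = 0")
  case True
  then show ?thesis using probYZ_le_probY[of y z] by (simp add: probYZ_def antisym)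
qed (simp add: condZY_def)

lemma pmf_eq_0_if_probZ_eq_0: "probZ P z = 0 \<Longrightarrow> pmf P (x, y, z) = 0"
  unfolding probZ_eq_sum by (simp add: sum_nonneg_eq_0_iff sum_nonneg)

lemma lawA_nonneg: "lawA P y x \<ge> 0"
  unfolding lawA_def tripleABC_def condZY_def probYZ_def probY_def probZ_def
  by (intro sum_nonneg) auto

lemma tripleABC_eq: "tripleABC P y x y' z = pmf P (x, y', z) * condZY P z y / probZ P z"
  by (simp add: tripleABC_def pmf_eq_0_if_probZ_eq_0)

lemma mixture_lawA_eq_probX: "(\<Sum>y\<in>UNIV. probY P y * lawA P y x) = probX P x"
proof -
  have cancel: "probZ P z * (pmf P (x, y', z) / probZ P z) = pmf P (x, y', z)" for y' z
    using pmf_eq_0_if_probZ_eq_0[of z x y'] by (cases "probZ P z = 0") simp_all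
  have "(\<Sum>y\<in>UNIV. probY P y * lawA P y x) =
      (\<Sum>y'\<in>UNIV. \<Sum>z\<in>UNIV. \<Sum>y\<in>UNIV. probYZ P y z * (pmf P (x, y', z) / probZ P z))"
    unfolding lawA_def tripleABC_eq sum_distrib_left
    by (subst sum.swap, subst (2) sum.swap) (simp add: probY_mult_condZY[symmetric] ac_simps)
  also have "\<dots> = (\<Sum>y'\<in>UNIV. \<Sum>z\<in>UNIV. probZ P z * (pmf P (x, y', z) / probZ P z))"
    by (simp only: sum_distrib_right[symmetric] sum_probYZ)
  also have "\<dots> = probX P x"
    by (simp only: cancel probX_eq_sum)
  finally show ?thesis .
qed

end

theorem lemma3:
  fixes P :: "('x::finite \<times> 'y::finite \<times> 'z::finite) pmf"
  shows "(\<Sum>y\<in>{y. probY P y > 0}. probY P y * shannon_entropy (lawA P y))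
           \<le> shannon_entropy (probX P)"
proof -
  have "(\<Sum>y\<in>{y. probY P y > 0}. probY P y * shannon_entropy (lawA P y)) =
      (\<Sum>y\<in>UNIV. probY P y * shannon_entropy (lawA P y))"
    by (rule sum.mono_neutral_left) (auto simp: probY_def order_less_le)
  also have "\<dots> \<le> shannon_entropy (\<lambda>x. \<Sum>y\<in>UNIV. probY P y * lawA P y x)"
    using sum_probY lawA_nonneg by (intro shannon_entropy_concave) (auto simp: probY_def)
  also have "\<dots> = shannon_entropy (probX P)"
    by (simp add: mixture_lawA_eq_probX)
  finally show ?thesis .
qed

end
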